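(* Let $0<\beta\leq\frac12$. Then for all $u\in H^1(\mathbb{R}_+)$ \[ \int_0^\infty|u|^2(1+t)^{2\beta-1}dt\leq 2^{-2\beta}(1-2\beta)^{2\beta-1}\beta^{-1}\left(\int_0^\infty|u'|^2dt\right)^{\frac{1-2\beta}2}\left(\int_0^\infty|u|^2dt\right)^{\frac{1+2\beta}2}, \] using the convention $0^0=1$. *)

theory Defs
  imports "HOL-Analysis.Analysis"
begin

text \<open>Real power with the convention 0^0 = 1 (Isabelle's powr has 0 powr 0 = 0).\<close>
definition pow0 :: "real \<Rightarrow> real \<Rightarrow> real" where
  "pow0 x a = (if x = 0 \<and> a = 0 then 1 else x powr a)"

text \<open>u belongs to H^1(R_+) with (weak) derivative u': u and u' are square integrable
  on [0,\<infinity>) and u is (a representative that is) the primitive of u', i.e.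
  u t = u 0 + \<integral>_0^t u' for all t \<ge> 0.\<close>
definition H1_halfline :: "(real \<Rightarrow> complex) \<Rightarrow> (real \<Rightarrow> complex) \<Rightarrow> bool" where
  "H1_halfline u u' \<longleftrightarrow>
     u \<in> borel_measurable lborel \<and> u' \<in> borel_measurable lborel \<and>
     set_integrable lborel {0..} (\<lambda>t. (cmod (u t))^2) \<and>
     set_integrable lborel {0..} (\<lambda>t. (cmod (u' t))^2) \<and>
     (\<forall>t\<ge>0. set_integrable lborel {0..t} u' \<and>
              u t = u 0 + set_lebesgue_integral lborel {0..t} u')"

end

theory Submission
  imports Defs
begin

text \<open>
  Let N and D be the integrals of |u|^2 and |u'|^2 over [0, \<infinity>). The function |u|^2 is
  absolutely continuous with derivative 2 u \<bullet> u', so |u t|^2 exceeds |u s|^2 for s \<ge> t by at most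
  K = 2 \<integral> |u \<bullet> u'|; as |u|^2 is integrable, |u t|^2 \<le> K, and by AM-GM this gives Agmon's bound
  |u t|^2 \<le> M = 2 sqrt N sqrt D.
  Splitting the weighted integral at T, with |u|^2 \<le> M on [0, T] and
  (1 + t) powr (2\<beta> - 1) \<le> T powr (2\<beta> - 1) beyond T, bounds it by
  M T powr (2\<beta>) / (2\<beta>) + T powr (2\<beta> - 1) N, and T = (1 - 2\<beta>) N / M gives the constant.
  The chain rule for |u|^2, with u merely absolutely continuous, comes from Fubini's theorem.
\<close>

lemma integrable_pair_mult_bounded:
  fixes g :: "real \<Rightarrow> real" and c :: "real \<times> real \<Rightarrow> real"
  assumes g: "integrable lborel g" and c[measurable]: "c \<in> borel_measurable (lborel \<Otimes>\<^sub>M lborel)"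
    and c_le: "\<And>z. \<bar>c z\<bar> \<le> 1"
  shows "integrable (lborel \<Otimes>\<^sub>M lborel) (\<lambda>(x, y). g x * g y * c (x, y))"
proof -
  have [measurable]: "g \<in> borel_measurable lborel" using g by (rule borel_measurable_integrable)
  have "integrable (lborel \<Otimes>\<^sub>M lborel) (\<lambda>(x, y). g x * g y)"
    by (intro lborel_pair.Fubini_integrable) (use g in \<open>auto simp: abs_mult\<close>)
  then show ?thesis
  proof (rule Bochner_Integration.integrable_bound)
    show "AE z in lborel \<Otimes>\<^sub>M lborel. norm (case z of (x, y) \<Rightarrow> g x * g y * c (x, y))
        \<le> norm (case z of (x, y) \<Rightarrow> g x * g y)"
      using c_le by (intro AE_I2) (auto simp: abs_mult intro!: mult_left_le)
  qed measurable
qed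

lemma integral_mult_primitive_eq_half_square:
  fixes g :: "real \<Rightarrow> real"
  assumes g: "integrable lborel g"
  shows "integrable lborel (\<lambda>x. g x * (\<integral>y. g y * indicator {..x} y \<partial>lborel))"
    and "(\<integral>x. g x * (\<integral>y. g y * indicator {..x} y \<partial>lborel) \<partial>lborel) = (\<integral>x. g x \<partial>lborel)^2 / 2"
proof -
  have [measurable]: "g \<in> borel_measurable lborel" using g by (rule borel_measurable_integrable)
  have le: "integrable (lborel \<Otimes>\<^sub>M lborel) (\<lambda>(x, y). g x * g y * of_bool (y \<le> x))"
    and gt: "integrable (lborel \<Otimes>\<^sub>M lborel) (\<lambda>(x, y). g x * g y * of_bool (x < y))"
    using integrable_pair_mult_bounded[OF g, of "\<lambda>(x, y). of_bool (y \<le> x)"]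
      integrable_pair_mult_bounded[OF g, of "\<lambda>(x, y). of_bool (x < y)"]
    by (simp_all add: case_prod_beta')
  have prim: "(\<lambda>x. g x * (\<integral>y. g y * indicator {..x} y \<partial>lborel))
      = (\<lambda>x. \<integral>y. g x * g y * of_bool (y \<le> x) \<partial>lborel)"
    by (simp add: indicator_def of_bool_def mult.assoc)
  show int: "integrable lborel (\<lambda>x. g x * (\<integral>y. g y * indicator {..x} y \<partial>lborel))"
    unfolding prim using lborel_pair.integrable_fst[OF le] by simp
  have full: "integrable (lborel \<Otimes>\<^sub>M lborel) (\<lambda>(x, y). g x * g y)"
    using integrable_pair_mult_bounded[OF g, of "\<lambda>_. 1"] by simp
  define A where "A = (\<integral>x. g x * (\<integral>y. g y * indicator {..x} y \<partial>lborel) \<partial>lborel)"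
  have A_le: "A = (\<integral>z. (case z of (x, y) \<Rightarrow> g x * g y * of_bool (y \<le> x)) \<partial>lborel \<Otimes>\<^sub>M lborel)"
    unfolding A_def prim by (rule lborel_pair.integral_fst[OF le])
  \<comment> \<open>swapping the coordinates exchanges the two sides of the diagonal, a null set\<close>
  have A_gt: "A = (\<integral>z. (case z of (x, y) \<Rightarrow> g x * g y * of_bool (x < y)) \<partial>lborel \<Otimes>\<^sub>M lborel)"
  proof -
    have "(\<integral>x. g x * indicator {..<y} x \<partial>lborel) = (\<integral>x. g x * indicator {..y} x \<partial>lborel)" for y :: real
      using AE_lborel_singleton[of y] by (intro integral_cong_AE) (auto simp: indicator_def)
    then have "(\<lambda>y. \<integral>x. g x * g y * of_bool (x < y) \<partial>lborel)
        = (\<lambda>y. g y * (\<integral>x. g x * indicator {..y} x \<partial>lborel))"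
      by (simp add: indicator_def of_bool_def ac_simps flip: lessThan_iff)
    then show ?thesis
      using lborel_pair.integral_snd[OF gt] by (simp add: A_def)
  qed
  have "A + A = (\<integral>z. (case z of (x, y) \<Rightarrow> g x * g y) \<partial>lborel \<Otimes>\<^sub>M lborel)"
  proof -
    have "A + A = (\<integral>z. (case z of (x, y) \<Rightarrow> g x * g y * of_bool (y \<le> x))
        + (case z of (x, y) \<Rightarrow> g x * g y * of_bool (x < y)) \<partial>lborel \<Otimes>\<^sub>M lborel)"
      using A_le A_gt le gt by simp
    also have "\<dots> = (\<integral>z. (case z of (x, y) \<Rightarrow> g x * g y) \<partial>lborel \<Otimes>\<^sub>M lborel)"
      by (rule Bochner_Integration.integral_cong) (auto simp: of_bool_def)
    finally show ?thesis .
  qed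
  also have "\<dots> = (\<integral>x. g x \<partial>lborel)^2"
    using lborel_pair.integral_fst[OF full] by (simp add: power2_eq_square)
  finally show "A = (\<integral>x. g x \<partial>lborel)^2 / 2" by simp
qed

lemma integral_mult_primitive_Icc:
  fixes g v :: "real \<Rightarrow> real"
  assumes "a \<le> b" and g: "integrable lborel (\<lambda>x. g x * indicator {a..b} x)"
    and v: "\<And>x. a \<le> x \<Longrightarrow> x \<le> b \<Longrightarrow> v x = v a + (\<integral>y. g y * indicator {a..x} y \<partial>lborel)"
  shows "(\<integral>x. g x * v x * indicator {a..b} x \<partial>lborel) = ((v b)^2 - (v a)^2) / 2"
proof -
  define h where "h x = g x * indicator {a..b} x" for x
  note h_prim = integral_mult_primitive_eq_half_square[of h]
  have "integrable lborel h" using g by (simp add: h_def[abs_def])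
  have "(\<integral>y. h y * indicator {..x} y \<partial>lborel) = (\<integral>y. g y * indicator {a..x} y \<partial>lborel)"
    if "x \<le> b" for x
    using that by (intro Bochner_Integration.integral_cong) (auto simp: h_def indicator_def)
  then have "g x * v x * indicator {a..b} x = v a * h x + h x * (\<integral>y. h y * indicator {..x} y \<partial>lborel)"
    for x
    using v[of x] by (cases "a \<le> x \<and> x \<le> b") (auto simp: h_def indicator_def algebra_simps)
  then have "(\<integral>x. g x * v x * indicator {a..b} x \<partial>lborel)
      = v a * (\<integral>x. h x \<partial>lborel) + (\<integral>x. h x \<partial>lborel)^2 / 2"
    using h_prim \<open>integrable lborel h\<close> by simp
  moreover have "(\<integral>x. h x \<partial>lborel) = v b - v a"
    using v[of b] \<open>a \<le> b\<close> by (simp add: h_def)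
  ultimately show ?thesis by (simp add: power2_eq_square field_simps)
qed

lemma set_integrable_real_iff:
  fixes f :: "'a \<Rightarrow> real"
  shows "set_integrable M A f \<longleftrightarrow> integrable M (\<lambda>x. f x * indicator A x)"
  by (simp add: set_integrable_def mult.commute)

lemma set_lebesgue_integral_real_eq:
  fixes f :: "'a \<Rightarrow> real"
  shows "set_lebesgue_integral M A f = (\<integral>x. f x * indicator A x \<partial>M)"
  by (simp add: set_lebesgue_integral_def mult.commute)

lemma H1_halfline_measurable:
  assumes "H1_halfline u u'"
  shows "u \<in> borel_measurable lborel" and "u' \<in> borel_measurable lborel"
  using assms unfolding H1_halfline_def by blast+

lemma H1_halfline_integrable:
  assumes "H1_halfline u u'"
  shows "integrable lborel (\<lambda>x. (cmod (u x))^2 * indicator {0..} x)"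
    and "integrable lborel (\<lambda>x. (cmod (u' x))^2 * indicator {0..} x)"
  using assms unfolding H1_halfline_def set_integrable_real_iff by blast+

lemma H1_halfline_primitive_linear:
  fixes T :: "complex \<Rightarrow> real"
  assumes "H1_halfline u u'" and T: "bounded_linear T" and "0 \<le> x"
  shows "integrable lborel (\<lambda>y. T (u' y) * indicator {0..x} y)"
    and "T (u x) = T (u 0) + (\<integral>y. T (u' y) * indicator {0..x} y \<partial>lborel)"
proof -
  interpret bounded_linear T by (rule T)
  have int: "integrable lborel (\<lambda>y. indicator {0..x} y *\<^sub>R u' y)"
    and prim: "u x = u 0 + (\<integral>y. indicator {0..x} y *\<^sub>R u' y \<partial>lborel)"
    using assms unfolding H1_halfline_def set_integrable_def set_lebesgue_integral_def by blast+
  have T_ind: "T (indicator {0..x} y *\<^sub>R u' y) = T (u' y) * indicator {0..x} y" for y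
    by (simp add: scale)
  show "integrable lborel (\<lambda>y. T (u' y) * indicator {0..x} y)"
    using integrable_bounded_linear[OF T int] by (simp add: T_ind)
  show "T (u x) = T (u 0) + (\<integral>y. T (u' y) * indicator {0..x} y \<partial>lborel)"
    using arg_cong[OF prim, of T] integral_bounded_linear[OF T int] by (simp add: add T_ind)
qed

lemma H1_halfline_integrable_bounded:
  fixes f :: "real \<Rightarrow> real"
  assumes H: "H1_halfline u u'" and [measurable]: "f \<in> borel_measurable lborel" "A \<in> sets lborel"
    and "A \<subseteq> {0..}" and f_le: "\<And>x. \<bar>f x\<bar> \<le> cmod (u x) * cmod (u' x)"
  shows "integrable lborel (\<lambda>x. f x * indicator A x)"
proof (rule Bochner_Integration.integrable_bound)
  show "integrable lborel (\<lambda>x. (cmod (u x))^2 * indicator {0..} x + (cmod (u' x))^2 * indicator {0..} x)"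
    using H1_halfline_integrable[OF H] by simp
  have "\<bar>f x\<bar> \<le> (cmod (u x))^2 + (cmod (u' x))^2" for x
    using f_le[of x] sum_squares_bound[of "cmod (u x)" "cmod (u' x)"]
      mult_nonneg_nonneg[OF norm_ge_zero norm_ge_zero, of "u x" "u' x"]
    by linarith
  with \<open>A \<subseteq> {0..}\<close> show "AE x in lborel. norm (f x * indicator A x)
      \<le> norm ((cmod (u x))^2 * indicator {0..} x + (cmod (u' x))^2 * indicator {0..} x)"
    by (intro AE_I2) (auto simp: indicator_def abs_mult)
qed measurable

lemma H1_halfline_norm_sq_eq:
  assumes H: "H1_halfline u u'" and "0 \<le> b"
  shows "(cmod (u b))^2 = (cmod (u 0))^2 + 2 * (\<integral>x. (u x \<bullet> u' x) * indicator {0..b} x \<partial>lborel)"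
proof -
  have [measurable]: "u \<in> borel_measurable lborel" "u' \<in> borel_measurable lborel"
    using H by (rule H1_halfline_measurable)+
  have component:
    "(\<integral>x. T (u' x) * T (u x) * indicator {0..b} x \<partial>lborel) = ((T (u b))^2 - (T (u 0))^2) / 2"
    "integrable lborel (\<lambda>x. T (u' x) * T (u x) * indicator {0..b} x)"
    if T: "bounded_linear T" and T_le: "\<And>z. \<bar>T z\<bar> \<le> cmod z" for T :: "complex \<Rightarrow> real"
  proof -
    show "(\<integral>x. T (u' x) * T (u x) * indicator {0..b} x \<partial>lborel) = ((T (u b))^2 - (T (u 0))^2) / 2"
      using \<open>0 \<le> b\<close>
      by (intro integral_mult_primitive_Icc[where v = "\<lambda>x. T (u x)"] H1_halfline_primitive_linear[OF H T]) auto
    have [measurable]: "T \<in> borel_measurable borel"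
      using T by (intro borel_measurable_continuous_onI linear_continuous_on)
    show "integrable lborel (\<lambda>x. T (u' x) * T (u x) * indicator {0..b} x)"
      using T_le \<open>0 \<le> b\<close>
      by (intro H1_halfline_integrable_bounded[OF H])
         (auto simp: abs_mult mult.commute intro!: mult_mono)
  qed
  note Re = component[OF bounded_linear_Re abs_Re_le_cmod]
  note Im = component[OF bounded_linear_Im abs_Im_le_cmod]
  have "(\<integral>x. (u x \<bullet> u' x) * indicator {0..b} x \<partial>lborel)
      = (\<integral>x. Re (u' x) * Re (u x) * indicator {0..b} x + Im (u' x) * Im (u x) * indicator {0..b} x \<partial>lborel)"
    by (simp add: inner_complex_def algebra_simps)
  also have "\<dots> = ((cmod (u b))^2 - (cmod (u 0))^2) / 2"
    using Re Im by (simp add: cmod_power2 field_simps)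
  finally show ?thesis by simp
qed

lemma H1_halfline_integrable_inner:
  assumes H: "H1_halfline u u'"
  shows "integrable lborel (\<lambda>x. \<bar>u x \<bullet> u' x\<bar> * indicator {0..} x)"
proof -
  have [measurable]: "u \<in> borel_measurable lborel" "u' \<in> borel_measurable lborel"
    using H by (rule H1_halfline_measurable)+
  show ?thesis
    by (intro H1_halfline_integrable_bounded[OF H]) (auto intro: Cauchy_Schwarz_ineq2)
qed

lemma H1_halfline_norm_sq_le:
  assumes H: "H1_halfline u u'" and "0 \<le> t" "t \<le> s"
  shows "(cmod (u t))^2 \<le> (cmod (u s))^2 + 2 * (\<integral>x. \<bar>u x \<bullet> u' x\<bar> * indicator {0..} x \<partial>lborel)"
proof -
  have [measurable]: "u \<in> borel_measurable lborel" "u' \<in> borel_measurable lborel"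
    using H by (rule H1_halfline_measurable)+
  note int = H1_halfline_integrable_inner[OF H]
  have int_Icc: "integrable lborel (\<lambda>x. (u x \<bullet> u' x) * indicator {0..b} x)" for b
    by (intro H1_halfline_integrable_bounded[OF H]) (auto intro: Cauchy_Schwarz_ineq2)
  have "(\<integral>x. (u x \<bullet> u' x) * indicator {0..t} x \<partial>lborel) - (\<integral>x. (u x \<bullet> u' x) * indicator {0..s} x \<partial>lborel)
      = (\<integral>x. (u x \<bullet> u' x) * indicator {0..t} x - (u x \<bullet> u' x) * indicator {0..s} x \<partial>lborel)"
    using int_Icc by simp
  also have "\<dots> \<le> (\<integral>x. \<bar>u x \<bullet> u' x\<bar> * indicator {0..} x \<partial>lborel)"
    using int_Icc int \<open>t \<le> s\<close> by (intro integral_mono) (auto simp: indicator_def)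
  finally show ?thesis
    using H1_halfline_norm_sq_eq[OF H, of t] H1_halfline_norm_sq_eq[OF H, of s] assms by linarith
qed

lemma integrable_nonneg_ge_on_halfline_imp_nonpos:
  fixes f :: "real \<Rightarrow> real"
  assumes f: "integrable lborel f" "\<And>x. 0 \<le> f x" and ge: "\<And>s. t \<le> s \<Longrightarrow> e \<le> f s"
  shows "e \<le> 0"
proof (rule ccontr)
  assume "\<not> e \<le> 0"
  then have "e > 0" by simp
  obtain n :: nat where n: "(\<integral>x. f x \<partial>lborel) / e < n" using reals_Archimedean2 by blast
  have "e * n = (\<integral>x. e * indicator {t..t + n} x \<partial>lborel)"
    by (subst integral_FTC_Icc_real[where F = "\<lambda>x. e * x"])
       (auto intro!: derivative_eq_intros simp: algebra_simps)
  also have "\<dots> \<le> (\<integral>x. f x \<partial>lborel)"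
    using borel_integrable_atLeastAtMost[of t "t + n" "\<lambda>_. e"] f ge
    by (intro integral_mono) (auto simp: indicator_def)
  finally show False
    using n \<open>e > 0\<close> by (simp add: field_simps)
qed

lemma H1_halfline_norm_sq_le_integral_inner:
  assumes H: "H1_halfline u u'" and "0 \<le> t"
  shows "(cmod (u t))^2 \<le> 2 * (\<integral>x. \<bar>u x \<bullet> u' x\<bar> * indicator {0..} x \<partial>lborel)"
proof -
  define K where "K = 2 * (\<integral>x. \<bar>u x \<bullet> u' x\<bar> * indicator {0..} x \<partial>lborel)"
  have ge: "(cmod (u t))^2 - K \<le> (cmod (u s))^2 * indicator {0..} s" if "t \<le> s" for s
    using H1_halfline_norm_sq_le[OF H \<open>0 \<le> t\<close> that] \<open>0 \<le> t\<close> that by (simp add: K_def)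
  have "(cmod (u t))^2 - K \<le> 0"
    by (rule integrable_nonneg_ge_on_halfline_imp_nonpos[OF H1_halfline_integrable(1)[OF H] _ ge]) simp
  then show ?thesis by (simp add: K_def)
qed

text \<open>Weighted AM-GM, optimised over l below, stands in for the Cauchy-Schwarz inequality for integrals.\<close>

lemma H1_halfline_integral_inner_le:
  assumes H: "H1_halfline u u'" and "l > 0"
  shows "2 * (\<integral>x. \<bar>u x \<bullet> u' x\<bar> * indicator {0..} x \<partial>lborel)
    \<le> l * (\<integral>x. (cmod (u x))^2 * indicator {0..} x \<partial>lborel)
      + (\<integral>x. (cmod (u' x))^2 * indicator {0..} x \<partial>lborel) / l"
proof -
  note int = H1_halfline_integrable[OF H]
  have "2 * \<bar>u x \<bullet> u' x\<bar> \<le> l * (cmod (u x))^2 + (cmod (u' x))^2 / l" for x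
  proof -
    have "2 * \<bar>u x \<bullet> u' x\<bar> \<le> 2 * (sqrt l * cmod (u x)) * (cmod (u' x) / sqrt l)"
      using Cauchy_Schwarz_ineq2[of "u x" "u' x"] \<open>l > 0\<close> by simp
    also have "\<dots> \<le> (sqrt l * cmod (u x))^2 + (cmod (u' x) / sqrt l)^2"
      by (rule sum_squares_bound)
    finally show ?thesis
      using \<open>l > 0\<close> by (simp add: power_mult_distrib power_divide)
  qed
  then have "(\<integral>x. 2 * (\<bar>u x \<bullet> u' x\<bar> * indicator {0..} x) \<partial>lborel)
      \<le> (\<integral>x. l * ((cmod (u x))^2 * indicator {0..} x) + (cmod (u' x))^2 * indicator {0..} x / l \<partial>lborel)"
    using H1_halfline_integrable_inner[OF H] int
    by (intro integral_mono) (auto simp: indicator_def)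
  then show ?thesis
    using H1_halfline_integrable_inner[OF H] int by simp
qed

lemma le_2_sqrt_mult_sqrt_of_le_scaled_sum:
  fixes x N D :: real
  assumes "0 \<le> N" "0 \<le> D" and le: "\<And>l. l > 0 \<Longrightarrow> x \<le> l * N + D / l"
  shows "x \<le> 2 * sqrt N * sqrt D"
proof (cases "N > 0 \<and> D > 0")
  case True
  then have "x \<le> (sqrt D / sqrt N) * N + D / (sqrt D / sqrt N)" by (intro le) simp
  also have "\<dots> = 2 * sqrt N * sqrt D"
    using True by (simp add: field_simps)
  finally show ?thesis .
next
  case False
  have "x \<le> e" if "e > 0" for e
  proof (cases "N = 0")
    case True
    have "x \<le> ((D + 1) / e) * N + D / ((D + 1) / e)"
      using \<open>0 \<le> D\<close> \<open>e > 0\<close> by (intro le) simp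
    also have "\<dots> \<le> e"
      using True \<open>0 \<le> D\<close> \<open>e > 0\<close> by (simp add: field_simps)
    finally show ?thesis .
  next
    case False
    then have "D = 0" using \<open>\<not> (N > 0 \<and> D > 0)\<close> assms(1,2) by simp
    have "x \<le> (e / (N + 1)) * N + D / (e / (N + 1))"
      using \<open>0 \<le> N\<close> \<open>e > 0\<close> by (intro le) simp
    also have "\<dots> \<le> e"
      using \<open>D = 0\<close> \<open>0 \<le> N\<close> \<open>e > 0\<close> by (simp add: field_simps)
    finally show ?thesis .
  qed
  then have "x \<le> 0" by (rule field_le_epsilon[where y = 0, simplified])
  with False assms(1,2) show ?thesis by auto
qed

lemma H1_halfline_sup_bound:
  assumes H: "H1_halfline u u'" and "0 \<le> t"
  shows "(cmod (u t))^2 \<le> 2 * sqrt (\<integral>x. (cmod (u x))^2 * indicator {0..} x \<partial>lborel)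
                           * sqrt (\<integral>x. (cmod (u' x))^2 * indicator {0..} x \<partial>lborel)"
  using H1_halfline_norm_sq_le_integral_inner[OF H \<open>0 \<le> t\<close>] H1_halfline_integral_inner_le[OF H]
  by (intro le_2_sqrt_mult_sqrt_of_le_scaled_sum) (force intro!: integral_nonneg_AE)+

lemma one_plus_powr_le:
  fixes T p :: real
  assumes "0 \<le> T" "0 < p" "p \<le> 1"
  shows "(1 + T) powr p \<le> 1 + T powr p"
proof (cases "T = 0")
  case False
  then have "T > 0" using \<open>0 \<le> T\<close> by simp
  have "(1 + T) powr p = (1 + T) * (1 + T) powr (p - 1)"
    using \<open>T > 0\<close> by (simp add: powr_diff)
  also have "\<dots> = (1 + T) powr (p - 1) + T * (1 + T) powr (p - 1)"
    by (simp add: distrib_right)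
  also have "\<dots> \<le> 1 + T * T powr (p - 1)"
    using powr_mono[of "p - 1" 0 "1 + T"] \<open>T > 0\<close> assms
    by (intro add_mono mult_left_mono powr_mono2') auto
  also have "\<dots> = 1 + T powr p"
    using \<open>T > 0\<close> by (simp add: powr_diff)
  finally show ?thesis .
qed simp

lemma integral_one_plus_powr_Icc:
  fixes T p :: real
  assumes "0 \<le> T" "0 < p"
  shows "(\<integral>x. (1 + x) powr (p - 1) * indicator {0..T} x \<partial>lborel) = ((1 + T) powr p - 1) / p"
proof -
  have "((\<lambda>x. (1 + x) powr p / p) has_real_derivative (1 + x) powr (p - 1)) (at x)" if "0 \<le> x" for x
    using that \<open>0 < p\<close> by (auto intro!: derivative_eq_intros simp: powr_diff)
  then have "(\<integral>x. (1 + x) powr (p - 1) * indicator {0..T} x \<partial>lborel) = (1 + T) powr p / p - 1 / p"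
    using \<open>0 \<le> T\<close> by (subst integral_FTC_Icc_real) (auto intro!: continuous_intros)
  then show ?thesis by (simp add: diff_divide_distrib)
qed

lemma halfline_weighted_integral_le:
  fixes f :: "real \<Rightarrow> real" and M T p :: real
  assumes [measurable]: "f \<in> borel_measurable lborel"
    and f: "integrable lborel (\<lambda>x. f x * indicator {0..} x)" "\<And>x. 0 \<le> f x"
    and f_le: "\<And>x. 0 \<le> x \<Longrightarrow> f x \<le> M" and "0 < T" "0 < p" "p \<le> 1"
  shows "(\<integral>x. f x * (1 + x) powr (p - 1) * indicator {0..} x \<partial>lborel)
    \<le> M * T powr p / p + T powr (p - 1) * (\<integral>x. f x * indicator {0..} x \<partial>lborel)"
proof -
  have w_int: "integrable lborel (\<lambda>x. (1 + x) powr (p - 1) * indicator {0..T} x)"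
    by (rule borel_integrable_atLeastAtMost) (auto intro!: continuous_intros)
  have w_le_1: "(1 + x) powr (p - 1) \<le> 1" if "0 \<le> x" for x
    using powr_mono[of "p - 1" 0 "1 + x"] that \<open>p \<le> 1\<close> by simp
  have w_le_T: "(1 + x) powr (p - 1) \<le> T powr (p - 1)" if "T \<le> x" for x
    using that \<open>0 < T\<close> \<open>p \<le> 1\<close> by (intro powr_mono2') auto
  have pointwise: "f x * (1 + x) powr (p - 1) * indicator {0..} x
      \<le> M * ((1 + x) powr (p - 1) * indicator {0..T} x) + T powr (p - 1) * (f x * indicator {0..} x)"
    for x
  proof (cases "0 \<le> x")
    case True
    have "f x * (1 + x) powr (p - 1) \<le> M * (1 + x) powr (p - 1)" if "x \<le> T"
      using f_le[OF True] by (intro mult_right_mono) auto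
    moreover have "f x * (1 + x) powr (p - 1) \<le> T powr (p - 1) * f x" if "\<not> x \<le> T"
      using w_le_T[of x] that f(2)[of x] by (simp add: mult.commute mult_left_mono)
    ultimately show ?thesis
      using True f(2)[of x] f_le[OF True] by (auto simp: indicator_def intro: add_increasing add_increasing2)
  qed (simp add: indicator_def)
  have "(\<integral>x. f x * (1 + x) powr (p - 1) * indicator {0..} x \<partial>lborel)
      \<le> (\<integral>x. M * ((1 + x) powr (p - 1) * indicator {0..T} x) + T powr (p - 1) * (f x * indicator {0..} x) \<partial>lborel)"
  proof (intro integral_mono pointwise)
    show "integrable lborel (\<lambda>x. f x * (1 + x) powr (p - 1) * indicator {0..} x)"
    proof (rule Bochner_Integration.integrable_bound[OF f(1)])
      show "AE x in lborel. norm (f x * (1 + x) powr (p - 1) * indicator {0..} x) \<le> norm (f x * indicator {0..} x)"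
        using w_le_1 f(2) by (intro AE_I2) (auto simp: indicator_def intro: mult_left_le)
    qed measurable
  qed (use w_int f(1) in simp)
  also have "\<dots> = M * ((1 + T) powr p - 1) / p + T powr (p - 1) * (\<integral>x. f x * indicator {0..} x \<partial>lborel)"
    using w_int f(1) \<open>0 < T\<close> \<open>0 < p\<close> by (simp add: integral_one_plus_powr_Icc)
  also have "\<dots> \<le> M * T powr p / p + T powr (p - 1) * (\<integral>x. f x * indicator {0..} x \<partial>lborel)"
  proof -
    have "0 \<le> M" using f(2)[of 0] f_le[of 0] by simp
    then show ?thesis
      using one_plus_powr_le[of T p] assms by (intro add_right_mono divide_right_mono mult_left_mono) auto
  qed
  finally show ?thesis .
qed

lemma halfline_weighted_integral_le_optimal:
  fixes f :: "real \<Rightarrow> real" and M N p :: real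
  assumes [measurable]: "f \<in> borel_measurable lborel"
    and f: "integrable lborel (\<lambda>x. f x * indicator {0..} x)" "\<And>x. 0 \<le> f x"
    and f_le: "\<And>x. 0 \<le> x \<Longrightarrow> f x \<le> M" and N: "(\<integral>x. f x * indicator {0..} x \<partial>lborel) = N"
    and "0 < M" "0 < N" "0 < p" "p < 1"
  shows "(\<integral>x. f x * (1 + x) powr (p - 1) * indicator {0..} x \<partial>lborel)
    \<le> ((1 - p) * N / M) powr (p - 1) * N / p"
proof -
  \<comment> \<open>the minimiser of the bound in \<open>halfline_weighted_integral_le\<close>\<close>
  define T where "T = (1 - p) * N / M"
  have "T > 0" using assms by (simp add: T_def)
  have "T powr p = T * T powr (p - 1)"
    using \<open>T > 0\<close> by (simp add: powr_diff)
  then have "M * T powr p = (1 - p) * N * T powr (p - 1)"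
    using \<open>0 < M\<close> by (simp add: T_def)
  then have "M * T powr p / p + T powr (p - 1) * N = T powr (p - 1) * N / p"
    using \<open>0 < p\<close> by (simp add: field_simps)
  then show ?thesis
    using halfline_weighted_integral_le[OF assms(1) f f_le \<open>T > 0\<close> \<open>0 < p\<close>] \<open>p < 1\<close>
    by (simp add: N T_def)
qed

lemma interpolation_constant_eq:
  fixes N D \<beta> :: real
  assumes "0 < N" "0 < D" "0 < \<beta>" "\<beta> < 1/2"
  shows "((1 - 2*\<beta>) * N / (2 * sqrt N * sqrt D)) powr (2*\<beta> - 1) * N / (2*\<beta>)
    = 2 powr (-2*\<beta>) * (1 - 2*\<beta>) powr (2*\<beta> - 1) / \<beta> * D powr ((1 - 2*\<beta>)/2) * N powr ((1 + 2*\<beta>)/2)"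
proof -
  have "ln ((1 - 2*\<beta>) * N) = ln (1 - 2*\<beta>) + ln N"
    using assms by (simp add: ln_mult)
  then have "ln (((1 - 2*\<beta>) * N / (2 * sqrt N * sqrt D)) powr (2*\<beta> - 1) * N / (2*\<beta>))
    = ln (2 powr (-2*\<beta>) * (1 - 2*\<beta>) powr (2*\<beta> - 1) / \<beta> * D powr ((1 - 2*\<beta>)/2) * N powr ((1 + 2*\<beta>)/2))"
    using assms by (simp add: ln_mult ln_div ln_powr ln_sqrt field_simps)
  then show ?thesis
    using assms by (subst (asm) ln_inj_iff) auto
qed

lemma H1_halfline_weighted_integral_le:
  fixes \<beta> N D :: real
  assumes H: "H1_halfline u u'"
    and N: "(\<integral>x. (cmod (u x))^2 * indicator {0..} x \<partial>lborel) = N"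
    and D: "(\<integral>x. (cmod (u' x))^2 * indicator {0..} x \<partial>lborel) = D"
    and "0 < N" "0 < D" "0 < \<beta>" "\<beta> < 1/2"
  shows "(\<integral>t. (cmod (u t))^2 * (1 + t) powr (2*\<beta> - 1) * indicator {0..} t \<partial>lborel)
    \<le> 2 powr (-2*\<beta>) * (1 - 2*\<beta>) powr (2*\<beta> - 1) / \<beta> * D powr ((1 - 2*\<beta>)/2) * N powr ((1 + 2*\<beta>)/2)"
proof -
  have [measurable]: "u \<in> borel_measurable lborel"
    using H by (rule H1_halfline_measurable)
  have "(\<integral>t. (cmod (u t))^2 * (1 + t) powr (2*\<beta> - 1) * indicator {0..} t \<partial>lborel)
      \<le> ((1 - 2*\<beta>) * N / (2 * sqrt N * sqrt D)) powr (2*\<beta> - 1) * N / (2*\<beta>)"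
    using H1_halfline_integrable(1)[OF H] H1_halfline_sup_bound[OF H] assms
    by (intro halfline_weighted_integral_le_optimal) auto
  also have "\<dots> = 2 powr (-2*\<beta>) * (1 - 2*\<beta>) powr (2*\<beta> - 1) / \<beta> * D powr ((1 - 2*\<beta>)/2) * N powr ((1 + 2*\<beta>)/2)"
    using assms by (intro interpolation_constant_eq)
  finally show ?thesis .
qed

theorem lemma6p6:
  fixes \<beta> :: real and u u' :: "real \<Rightarrow> complex"
  assumes "0 < \<beta>" and "\<beta> \<le> 1/2" and "H1_halfline u u'"
  shows "set_lebesgue_integral lborel {0..} (\<lambda>t. (cmod (u t))^2 * (1 + t) powr (2*\<beta> - 1))
    \<le> 2 powr (-2*\<beta>) * pow0 (1 - 2*\<beta>) (2*\<beta> - 1) / \<beta>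
       * pow0 (set_lebesgue_integral lborel {0..} (\<lambda>t. (cmod (u' t))^2)) ((1 - 2*\<beta>)/2)
       * pow0 (set_lebesgue_integral lborel {0..} (\<lambda>t. (cmod (u t))^2)) ((1 + 2*\<beta>)/2)"
proof -
  note H = \<open>H1_halfline u u'\<close>
  define N where "N = (\<integral>x. (cmod (u x))^2 * indicator {0..} x \<partial>lborel)"
  define D where "D = (\<integral>x. (cmod (u' x))^2 * indicator {0..} x \<partial>lborel)"
  define L where "L = (\<integral>t. (cmod (u t))^2 * (1 + t) powr (2*\<beta> - 1) * indicator {0..} t \<partial>lborel)"
  have "0 \<le> N" "0 \<le> D"
    unfolding N_def D_def by (intro integral_nonneg_AE AE_I2; simp)+
  consider "\<beta> = 1/2" | "N = 0 \<or> D = 0" | "\<beta> < 1/2" "0 < N" "0 < D"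
    using \<open>\<beta> \<le> 1/2\<close> \<open>0 \<le> N\<close> \<open>0 \<le> D\<close> by fastforce
  then have "L \<le> 2 powr (-2*\<beta>) * pow0 (1 - 2*\<beta>) (2*\<beta> - 1) / \<beta> * pow0 D ((1 - 2*\<beta>)/2) * pow0 N ((1 + 2*\<beta>)/2)"
  proof cases
    case 1
    have "L = N"
      unfolding L_def N_def 1 by (intro Bochner_Integration.integral_cong) (auto simp: indicator_def)
    then show ?thesis
      unfolding 1 using \<open>0 \<le> N\<close> by (simp add: pow0_def)
  next
    case 2
    then have "L = 0"
      using H1_halfline_sup_bound[OF H, folded N_def D_def]
      unfolding L_def by (intro integral_eq_zero_AE AE_I2) (auto simp: indicator_def)
    then show ?thesis
      using \<open>0 < \<beta>\<close> by (simp add: pow0_def)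
  next
    case 3
    then show ?thesis
      using H1_halfline_weighted_integral_le[OF H N_def[symmetric] D_def[symmetric]] \<open>0 < \<beta>\<close>
      by (simp add: L_def pow0_def)
  qed
  then show ?thesis
    by (simp add: set_lebesgue_integral_real_eq L_def N_def D_def)
qed

end
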